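(* Let $T$ be a countable tree with root $o$, and let $Q$ be a stochastic matrix on $T$ with $q(x,y)>0$ iff $x=y^-$. Let $\lambda\in\mathbb{C}\setminus\{0\}$ and let $f$ be a $\lambda$-polyharmonic function of order $n\ge1$ for $Q$. Then $$f(x)=\sum_{k=0}^{n-1}|x|^k\,h_k(x),\qquad x\in T,$$ where $h_0,\dots,h_{n-1}$ are $\lambda$-harmonic functions for $Q$, uniquely determined by $f$.
   Context: $|x|=d(o,x)$. $x^-$ is the neighbour of $x\ne o$ closer to $o$. $Qf(x)=\sum_{y:\,y^-=x}q(x,y)f(y)$, required to converge absolutely. $h$ is $\lambda$-harmonic for $Q$ if $Qh=\lambda h$. $f$ is $\lambda$-polyharmonic of order $n$ for $Q$ if $(\lambda I-Q)^nf=0$, where all successive applications of $Q$ are well defined. *)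

theory Defs
  imports "HOL-Analysis.Analysis"
begin

text \<open>A rooted tree on the vertex set UNIV of a countable type: root rt, and
  par x is the neighbour x^- of x (x \<noteq> rt) closer to the root.\<close>

definition rooted_tree :: "('a \<Rightarrow> 'a) \<Rightarrow> 'a \<Rightarrow> bool" where
  "rooted_tree par rt \<longleftrightarrow> (\<forall>x. \<exists>m. (par ^^ m) x = rt)"

definition depth :: "('a \<Rightarrow> 'a) \<Rightarrow> 'a \<Rightarrow> 'a \<Rightarrow> nat" where
  "depth par rt x = (LEAST m. (par ^^ m) x = rt)"

definition children :: "('a \<Rightarrow> 'a) \<Rightarrow> 'a \<Rightarrow> 'a \<Rightarrow> 'a set" where
  "children par rt x = {y. y \<noteq> rt \<and> par y = x}"

definition forward_stochastic :: "('a \<Rightarrow> 'a) \<Rightarrow> 'a \<Rightarrow> ('a \<Rightarrow> 'a \<Rightarrow> real) \<Rightarrow> bool" where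
  "forward_stochastic par rt q \<longleftrightarrow>
     (\<forall>x y. q x y \<ge> 0) \<and> (\<forall>x. (q x has_sum 1) UNIV) \<and>
     (\<forall>x y. q x y > 0 \<longleftrightarrow> (y \<noteq> rt \<and> par y = x))"

definition Q_defined :: "('a \<Rightarrow> 'a) \<Rightarrow> 'a \<Rightarrow> ('a \<Rightarrow> 'a \<Rightarrow> real) \<Rightarrow> ('a \<Rightarrow> complex) \<Rightarrow> bool" where
  "Q_defined par rt q f \<longleftrightarrow>
     (\<forall>x. (\<lambda>y. norm (complex_of_real (q x y) * f y)) summable_on children par rt x)"

definition Qop :: "('a \<Rightarrow> 'a) \<Rightarrow> 'a \<Rightarrow> ('a \<Rightarrow> 'a \<Rightarrow> real) \<Rightarrow> ('a \<Rightarrow> complex) \<Rightarrow> 'a \<Rightarrow> complex" where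
  "Qop par rt q f x = (\<Sum>\<^sub>\<infinity>y\<in>children par rt x. complex_of_real (q x y) * f y)"

definition lambda_harmonic ::
  "('a \<Rightarrow> 'a) \<Rightarrow> 'a \<Rightarrow> ('a \<Rightarrow> 'a \<Rightarrow> real) \<Rightarrow> complex \<Rightarrow> ('a \<Rightarrow> complex) \<Rightarrow> bool" where
  "lambda_harmonic par rt q lam h \<longleftrightarrow>
     Q_defined par rt q h \<and> (\<forall>x. Qop par rt q h x = lam * h x)"

definition Lop :: "('a \<Rightarrow> 'a) \<Rightarrow> 'a \<Rightarrow> ('a \<Rightarrow> 'a \<Rightarrow> real) \<Rightarrow> complex \<Rightarrow> ('a \<Rightarrow> complex) \<Rightarrow> 'a \<Rightarrow> complex" where
  "Lop par rt q lam f x = lam * f x - Qop par rt q f x"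

definition lambda_polyharmonic ::
  "('a \<Rightarrow> 'a) \<Rightarrow> 'a \<Rightarrow> ('a \<Rightarrow> 'a \<Rightarrow> real) \<Rightarrow> complex \<Rightarrow> nat \<Rightarrow> ('a \<Rightarrow> complex) \<Rightarrow> bool" where
  "lambda_polyharmonic par rt q lam n f \<longleftrightarrow>
     (\<forall>k<n. Q_defined par rt q ((Lop par rt q lam ^^ k) f)) \<and>
     (\<forall>x. (Lop par rt q lam ^^ n) f x = 0)"

end

theory Submission
  imports Defs "HOL-Combinatorics.Stirling"
begin

text \<open>Multiplying by a function of the depth commutes with Q up to a shift of the depth by one,
  since Q only looks at children. Hence for \<lambda>-harmonic h_k the identity
  (\<lambda>I - Q)(\<Sum>_k binom(|x|, k+1) h_k) = -\<lambda> \<Sum>_k binom(|x|, k) h_k (Pascal's rule) lets one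
  peel off one order of polyharmonicity at a time, giving an expansion of f in the
  binomial basis binom(|x|, k), which Stirling numbers convert into the power basis |x|^k.
  For uniqueness, if \<Sum>_k |x|^k e_k = 0 with e_k \<lambda>-harmonic and \<lambda> \<noteq> 0, applying Q
  repeatedly shows that the polynomial \<Sum>_k t^k e_k(x) vanishes at every t \<ge> |x|.\<close>

lemma of_nat_binomial_stirling:
  "(of_nat (m choose k) :: 'a::field_char_0) =
     (\<Sum>j\<le>k. (- 1) ^ (k + j) * of_nat (stirling k j) / fact k * of_nat m ^ j)"
proof -
  have "(of_nat (m choose k) :: 'a) = (- 1) ^ k * pochhammer (- of_nat m) k / fact k"
    by (simp add: binomial_gbinomial gbinomial_pochhammer)
  also have "\<dots> = (- 1) ^ k / fact k * (\<Sum>j\<le>k. of_nat (stirling k j) * (- of_nat m) ^ j)"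
    by (simp flip: stirling_pochhammer)
  also have "\<dots> = (\<Sum>j\<le>k. (- 1) ^ (k + j) * of_nat (stirling k j) / fact k * of_nat m ^ j)"
    by (simp add: sum_distrib_left power_add power_minus[of "of_nat m"] field_simps)
  finally show ?thesis .
qed

lemma of_nat_binomial_power_sum:
  assumes "k < n"
  shows "(of_nat (m choose k) :: 'a::field_char_0) =
     (\<Sum>j<n. (- 1) ^ (k + j) * of_nat (stirling k j) / fact k * of_nat m ^ j)"
  unfolding of_nat_binomial_stirling
  by (rule sum.mono_neutral_left) (use assms in auto)

lemma power_sum_coeffs_zero_if_tail_roots:
  fixes c :: "nat \<Rightarrow> 'a::{idom, real_normed_div_algebra}"
  assumes zero: "\<And>m. (\<Sum>i<n. of_nat (d + m) ^ i * c i) = 0" and "k < n"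
  shows "c k = 0"
proof -
  obtain N where n: "n = Suc N" using \<open>k < n\<close> by (cases n) auto
  have "range (\<lambda>m. of_nat (d + m) :: 'a) \<subseteq> {z. (\<Sum>i\<le>N. c i * z ^ i) = 0}"
    using zero by (auto simp: n lessThan_Suc_atMost mult.commute)
  moreover have "infinite (range (\<lambda>m. of_nat (d + m) :: 'a))"
    by (rule range_inj_infinite) (auto simp: inj_def)
  ultimately have "infinite {z. (\<Sum>i\<le>N. c i * z ^ i) = 0}"
    using finite_subset by blast
  then show ?thesis
    using polyfun_finite_roots \<open>k < n\<close> n by fastforce
qed

context
  fixes par :: "'a \<Rightarrow> 'a" and rt :: 'a and q :: "'a \<Rightarrow> 'a \<Rightarrow> real"
begin

lemma Q_defined_add:
  assumes "Q_defined par rt q a" and "Q_defined par rt q b"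
  shows "Q_defined par rt q (\<lambda>y. a y + b y)"
  unfolding Q_defined_def
proof
  fix x
  have "(\<lambda>y. norm (complex_of_real (q x y) * a y) + norm (complex_of_real (q x y) * b y))
      summable_on children par rt x"
    using assms unfolding Q_defined_def by (simp add: summable_on_add)
  then show "(\<lambda>y. norm (complex_of_real (q x y) * (a y + b y))) summable_on children par rt x"
    by (rule summable_on_comparison_test) (auto simp: distrib_left norm_triangle_ineq)
qed

lemma Qop_add:
  assumes "Q_defined par rt q a" and "Q_defined par rt q b"
  shows "Qop par rt q (\<lambda>y. a y + b y) x = Qop par rt q a x + Qop par rt q b x"
proof -
  have "(\<lambda>y. complex_of_real (q x y) * a y) summable_on children par rt x"
    and "(\<lambda>y. complex_of_real (q x y) * b y) summable_on children par rt x"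
    using assms by (auto intro: abs_summable_summable simp: Q_defined_def)
  then show ?thesis
    unfolding Qop_def by (simp add: infsum_add distrib_left)
qed

lemma Q_defined_sum:
  assumes "finite I" and "\<And>i. i \<in> I \<Longrightarrow> Q_defined par rt q (g i)"
  shows "Q_defined par rt q (\<lambda>y. \<Sum>i\<in>I. g i y)"
  using assms
proof (induction I rule: finite_induct)
  case empty
  then show ?case by (simp add: Q_defined_def)
next
  case (insert i I)
  then show ?case by (simp add: Q_defined_add)
qed

lemma Qop_sum:
  assumes "finite I" and "\<And>i. i \<in> I \<Longrightarrow> Q_defined par rt q (g i)"
  shows "Qop par rt q (\<lambda>y. \<Sum>i\<in>I. g i y) x = (\<Sum>i\<in>I. Qop par rt q (g i) x)"
  using assms
proof (induction I rule: finite_induct)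
  case empty
  then show ?case by (simp add: Qop_def)
next
  case (insert i I)
  then show ?case by (simp add: Qop_add Q_defined_sum)
qed

lemma lambda_polyharmonic_imp_Q_defined:
  "lambda_polyharmonic par rt q lam (Suc n) f \<Longrightarrow> Q_defined par rt q f"
  unfolding lambda_polyharmonic_def by (metis funpow_0 zero_less_Suc)

lemma lambda_polyharmonic_Lop:
  assumes "lambda_polyharmonic par rt q lam (Suc n) f"
  shows "lambda_polyharmonic par rt q lam n (Lop par rt q lam f)"
proof -
  have "(Lop par rt q lam ^^ k) (Lop par rt q lam f) = (Lop par rt q lam ^^ Suc k) f" for k
    by (simp only: funpow_Suc_right o_apply)
  then show ?thesis
    using assms unfolding lambda_polyharmonic_def by auto
qed

lemma lambda_polyharmonic_1_imp_harmonic: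
  "lambda_polyharmonic par rt q lam 1 f \<Longrightarrow> lambda_harmonic par rt q lam f"
  by (simp add: lambda_polyharmonic_def lambda_harmonic_def Lop_def)

context
  assumes tree: "rooted_tree par rt"
begin

lemma depth_child:
  assumes "y \<in> children par rt x"
  shows "depth par rt y = Suc (depth par rt x)"
proof -
  have "y \<noteq> rt" and "par y = x" using assms by (auto simp: children_def)
  have "\<exists>m. (par ^^ m) x = rt" using tree by (auto simp: rooted_tree_def)
  then have "(par ^^ depth par rt x) x = rt"
    unfolding depth_def by (rule LeastI_ex)
  show ?thesis unfolding depth_def[of par rt y]
  proof (rule Least_equality)
    show "(par ^^ Suc (depth par rt x)) y = rt"
      using \<open>(par ^^ depth par rt x) x = rt\<close> \<open>par y = x\<close>
      by (simp add: funpow_Suc_right del: funpow.simps)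
  next
    fix m assume m: "(par ^^ m) y = rt"
    then obtain m' where "m = Suc m'" using \<open>y \<noteq> rt\<close> by (cases m) auto
    with m \<open>par y = x\<close> have "(par ^^ m') x = rt"
      by (simp add: funpow_Suc_right del: funpow.simps)
    then show "Suc (depth par rt x) \<le> m"
      unfolding depth_def using \<open>m = Suc m'\<close> by (simp add: Least_le)
  qed
qed

lemma Q_defined_depth_mult:
  assumes "Q_defined par rt q g"
  shows "Q_defined par rt q (\<lambda>y. \<phi> (depth par rt y) * g y)"
  unfolding Q_defined_def
proof
  fix x
  have "(\<lambda>y. norm (\<phi> (Suc (depth par rt x))) * norm (complex_of_real (q x y) * g y))
      summable_on children par rt x"
    using assms unfolding Q_defined_def by (simp add: summable_on_cmult_right)
  then show "(\<lambda>y. norm (complex_of_real (q x y) * (\<phi> (depth par rt y) * g y)))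
      summable_on children par rt x"
    by (rule summable_on_cong[THEN iffD1, rotated]) (simp add: depth_child norm_mult)
qed

lemma Qop_depth_mult:
  "Qop par rt q (\<lambda>y. \<phi> (depth par rt y) * g y) x = \<phi> (Suc (depth par rt x)) * Qop par rt q g x"
proof -
  have "(\<Sum>\<^sub>\<infinity>y\<in>children par rt x. complex_of_real (q x y) * (\<phi> (depth par rt y) * g y))
      = (\<Sum>\<^sub>\<infinity>y\<in>children par rt x.
          \<phi> (Suc (depth par rt x)) * (complex_of_real (q x y) * g y))"
    by (rule infsum_cong) (simp add: depth_child algebra_simps)
  then show ?thesis
    unfolding Qop_def by (simp add: infsum_cmult_right')
qed

lemma Q_defined_diff:
  assumes "Q_defined par rt q a" and "Q_defined par rt q b"
  shows "Q_defined par rt q (\<lambda>y. a y - b y)"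
  using Q_defined_add[OF assms(1) Q_defined_depth_mult[OF assms(2), where \<phi> = "\<lambda>_. - 1"]] by simp

lemma Qop_diff:
  assumes "Q_defined par rt q a" and "Q_defined par rt q b"
  shows "Qop par rt q (\<lambda>y. a y - b y) x = Qop par rt q a x - Qop par rt q b x"
  using Qop_add[OF assms(1) Q_defined_depth_mult[OF assms(2), where \<phi> = "\<lambda>_. - 1"]]
    Qop_depth_mult[where \<phi> = "\<lambda>_. - 1" and g = b] by simp

lemma lambda_harmonic_diff:
  assumes "lambda_harmonic par rt q lam a" and "lambda_harmonic par rt q lam b"
  shows "lambda_harmonic par rt q lam (\<lambda>x. a x - b x)"
  using assms by (simp add: lambda_harmonic_def Q_defined_diff Qop_diff right_diff_distrib)

lemma Q_defined_depth_weighted_sum: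
  assumes "finite I" and "\<And>i. i \<in> I \<Longrightarrow> lambda_harmonic par rt q lam (G i)"
  shows "Q_defined par rt q (\<lambda>y. \<Sum>i\<in>I. \<phi> i (depth par rt y) * G i y)"
proof (rule Q_defined_sum[OF assms(1)])
  fix i assume "i \<in> I"
  with assms(2) have "Q_defined par rt q (G i)" by (simp add: lambda_harmonic_def)
  then show "Q_defined par rt q (\<lambda>y. \<phi> i (depth par rt y) * G i y)"
    by (rule Q_defined_depth_mult)
qed

lemma Qop_depth_weighted_sum:
  assumes "finite I" and "\<And>i. i \<in> I \<Longrightarrow> lambda_harmonic par rt q lam (G i)"
  shows "Qop par rt q (\<lambda>y. \<Sum>i\<in>I. \<phi> i (depth par rt y) * G i y) x
    = lam * (\<Sum>i\<in>I. \<phi> i (Suc (depth par rt x)) * G i x)"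
proof -
  have "Qop par rt q (\<lambda>y. \<Sum>i\<in>I. \<phi> i (depth par rt y) * G i y) x
      = (\<Sum>i\<in>I. Qop par rt q (\<lambda>y. \<phi> i (depth par rt y) * G i y) x)"
    by (rule Qop_sum[OF assms(1)], rule Q_defined_depth_mult)
      (use assms(2) in \<open>simp add: lambda_harmonic_def\<close>)
  also have "\<dots> = (\<Sum>i\<in>I. \<phi> i (Suc (depth par rt x)) * (lam * G i x))"
    using assms by (simp add: Qop_depth_mult lambda_harmonic_def)
  finally show ?thesis
    by (simp add: sum_distrib_left mult.left_commute)
qed

lemma lambda_harmonic_lincomb:
  assumes "finite I" and "\<And>i. i \<in> I \<Longrightarrow> lambda_harmonic par rt q lam (G i)"
  shows "lambda_harmonic par rt q lam (\<lambda>x. \<Sum>i\<in>I. c i * G i x)"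
  using Q_defined_depth_weighted_sum[OF assms, where \<phi> = "\<lambda>i _. c i"]
    Qop_depth_weighted_sum[OF assms, where \<phi> = "\<lambda>i _. c i"]
  by (simp add: lambda_harmonic_def)

context
  fixes lam :: complex
  assumes lam: "lam \<noteq> 0"
begin

lemma Lop_binomial_primitive:
  assumes G: "\<And>k. k < N \<Longrightarrow> lambda_harmonic par rt q lam (G k)"
  defines "F \<equiv> \<lambda>x. \<Sum>k<N. - of_nat (depth par rt x choose Suc k) / lam * G k x"
  shows "Q_defined par rt q F"
    and "Lop par rt q lam F x = (\<Sum>k<N. of_nat (depth par rt x choose k) * G k x)"
proof -
  let ?\<phi> = "\<lambda>k t. - of_nat (t choose Suc k) / lam"
  show "Q_defined par rt q F"
    unfolding F_def by (rule Q_defined_depth_weighted_sum[where \<phi> = ?\<phi>]) (use G in auto)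
  have "Qop par rt q F x = lam * (\<Sum>k<N. ?\<phi> k (Suc (depth par rt x)) * G k x)"
    unfolding F_def by (rule Qop_depth_weighted_sum[where \<phi> = ?\<phi>]) (use G in auto)
  also have "\<dots> = (\<Sum>k<N. - of_nat (Suc (depth par rt x) choose Suc k) * G k x)"
    using lam by (simp add: sum_distrib_left del: binomial_Suc_Suc)
  finally have QF: "Qop par rt q F x = \<dots>" .
  have lamF: "lam * F x = (\<Sum>k<N. - of_nat (depth par rt x choose Suc k) * G k x)"
    using lam by (simp add: F_def sum_distrib_left)
  show "Lop par rt q lam F x = (\<Sum>k<N. of_nat (depth par rt x choose k) * G k x)"
    unfolding Lop_def lamF QF by (simp add: algebra_simps flip: sum_subtractf)
qed

lemma lambda_polyharmonic_binomial_expansion: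
  assumes "lambda_polyharmonic par rt q lam (Suc m) f"
  shows "\<exists>G. (\<forall>k<Suc m. lambda_harmonic par rt q lam (G k)) \<and>
             (\<forall>x. f x = (\<Sum>k<Suc m. of_nat (depth par rt x choose k) * G k x))"
  using assms
proof (induction m arbitrary: f)
  case 0
  then show ?case
    by (intro exI[of _ "\<lambda>_. f"]) (simp add: lambda_polyharmonic_1_imp_harmonic)
next
  case (Suc m)
  obtain G where G: "\<forall>k<Suc m. lambda_harmonic par rt q lam (G k)"
    and LG: "\<forall>x. Lop par rt q lam f x = (\<Sum>k<Suc m. of_nat (depth par rt x choose k) * G k x)"
    using Suc.IH[OF lambda_polyharmonic_Lop[OF Suc.prems]] by blast
  define F where "F = (\<lambda>x. \<Sum>k<Suc m. - of_nat (depth par rt x choose Suc k) / lam * G k x)"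
  have F: "Q_defined par rt q F" "\<And>x. Lop par rt q lam F x = Lop par rt q lam f x"
    unfolding F_def using Lop_binomial_primitive[where N = "Suc m" and G = G] G LG by auto
  have f: "Q_defined par rt q f"
    using Suc.prems by (rule lambda_polyharmonic_imp_Q_defined)
  \<comment> \<open>f - F becomes the coefficient of binom(|x|, 0), and the G k shift up by one.\<close>
  define G' where "G' = case_nat (\<lambda>x. f x - F x) (\<lambda>k x. - 1 / lam * G k x)"
  have "lambda_harmonic par rt q lam (\<lambda>x. f x - F x)"
    unfolding lambda_harmonic_def
  proof (intro conjI allI)
    show "Q_defined par rt q (\<lambda>x. f x - F x)"
      by (rule Q_defined_diff[OF f F(1)])
    fix x
    have "Qop par rt q (\<lambda>x. f x - F x) x = Qop par rt q f x - Qop par rt q F x"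
      by (rule Qop_diff[OF f F(1)])
    also have "\<dots> = lam * (f x - F x)"
      using F(2)[of x] by (simp add: Lop_def algebra_simps)
    finally show "Qop par rt q (\<lambda>x. f x - F x) x = lam * (f x - F x)" .
  qed
  moreover have "lambda_harmonic par rt q lam (\<lambda>x. - 1 / lam * G k x)" if "k < Suc m" for k
    using lambda_harmonic_lincomb[where I = "{k}" and G = G and c = "\<lambda>_. - 1 / lam"] G that
    by simp
  ultimately have "\<forall>k<Suc (Suc m). lambda_harmonic par rt q lam (G' k)"
    by (auto simp: G'_def less_Suc_eq_0_disj)
  moreover have "\<forall>x. f x = (\<Sum>k<Suc (Suc m). of_nat (depth par rt x choose k) * G' k x)"
  proof
    fix x
    have F_alt: "(\<Sum>k<Suc m. of_nat (depth par rt x choose Suc k) * (- 1 / lam * G k x)) = F x"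
      unfolding F_def by (rule sum.cong) simp_all
    show "f x = (\<Sum>k<Suc (Suc m). of_nat (depth par rt x choose k) * G' k x)"
      unfolding G'_def sum.lessThan_Suc_shift[of _ "Suc m"] nat.case F_alt by simp
  qed
  ultimately show ?case by blast
qed

lemma lambda_harmonic_depth_power_sum_zero:
  assumes e: "\<And>k. k < n \<Longrightarrow> lambda_harmonic par rt q lam (e k)"
    and zero: "\<And>x. (\<Sum>k<n. of_nat (depth par rt x) ^ k * e k x) = 0"
    and "k < n"
  shows "e k x = 0"
proof -
  have shifted: "(\<Sum>k<n. of_nat (depth par rt x + m) ^ k * e k x) = 0" for m x
  proof (induction m arbitrary: x)
    case 0
    show ?case using zero by simp
  next
    case (Suc m)
    have "Qop par rt q (\<lambda>y. \<Sum>k<n. of_nat (depth par rt y + m) ^ k * e k y) x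
        = lam * (\<Sum>k<n. of_nat (Suc (depth par rt x) + m) ^ k * e k x)"
      by (rule Qop_depth_weighted_sum[where \<phi> = "\<lambda>k t. of_nat (t + m) ^ k"]) (use e in auto)
    moreover have "Qop par rt q (\<lambda>y. \<Sum>k<n. of_nat (depth par rt y + m) ^ k * e k y) x = 0"
      using Suc.IH by (simp add: Qop_def)
    ultimately show ?case using lam by simp
  qed
  show ?thesis
    using shifted \<open>k < n\<close> by (rule power_sum_coeffs_zero_if_tail_roots)
qed

lemma lambda_harmonic_depth_power_expansion_unique:
  assumes "\<forall>k<n. lambda_harmonic par rt q lam (h k)"
    and "\<forall>k<n. lambda_harmonic par rt q lam (h' k)"
    and eq: "\<forall>x. (\<Sum>k<n. of_nat (depth par rt x) ^ k * h k x)
      = (\<Sum>k<n. of_nat (depth par rt x) ^ k * h' k x)"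
    and "k < n"
  shows "h' k = h k"
proof
  fix x
  have "(\<Sum>k<n. of_nat (depth par rt y) ^ k * (h' k y - h k y)) = 0" for y
    using eq[rule_format, of y] by (simp only: right_diff_distrib sum_subtractf) simp
  then have "h' k x - h k x = 0"
    by (rule lambda_harmonic_depth_power_sum_zero[where e = "\<lambda>k x. h' k x - h k x", rotated])
      (use assms lambda_harmonic_diff in auto)
  then show "h' k x = h k x" by simp
qed

lemma lambda_polyharmonic_power_expansion:
  assumes "lambda_polyharmonic par rt q lam n f"
  shows "\<exists>h. (\<forall>j. lambda_harmonic par rt q lam (h j)) \<and>
             (\<forall>x. f x = (\<Sum>j<n. of_nat (depth par rt x) ^ j * h j x))"
proof (cases n)
  case 0
  then show ?thesis
    using assms by (intro exI[of _ "\<lambda>_ _. 0"])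
      (simp add: lambda_polyharmonic_def lambda_harmonic_def Q_defined_def Qop_def)
next
  case (Suc m)
  obtain G where G: "\<forall>k<n. lambda_harmonic par rt q lam (G k)"
    and fG: "\<forall>x. f x = (\<Sum>k<n. of_nat (depth par rt x choose k) * G k x)"
    using lambda_polyharmonic_binomial_expansion assms Suc by blast
  let ?c = "\<lambda>k j. (- 1) ^ (k + j) * of_nat (stirling k j) / fact k :: complex"
  define h where "h = (\<lambda>j x. \<Sum>k<n. ?c k j * G k x)"
  have "lambda_harmonic par rt q lam (h j)" for j
    unfolding h_def by (rule lambda_harmonic_lincomb) (use G in auto)
  moreover have "f x = (\<Sum>j<n. of_nat (depth par rt x) ^ j * h j x)" for x
  proof -
    have "f x = (\<Sum>k<n. (\<Sum>j<n. ?c k j * of_nat (depth par rt x) ^ j) * G k x)"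
      using fG by (simp add: of_nat_binomial_power_sum)
    also have "\<dots> = (\<Sum>j<n. \<Sum>k<n. of_nat (depth par rt x) ^ j * (?c k j * G k x))"
      by (subst sum.swap) (simp add: sum_distrib_left sum_distrib_right mult_ac)
    also have "\<dots> = (\<Sum>j<n. of_nat (depth par rt x) ^ j * h j x)"
      by (simp add: h_def sum_distrib_left)
    finally show ?thesis .
  qed
  ultimately show ?thesis by blast
qed

end

end

end

theorem corollary6p3:
  fixes par :: "'a::countable \<Rightarrow> 'a" and rt :: 'a
    and q :: "'a \<Rightarrow> 'a \<Rightarrow> real" and lam :: complex and n :: nat
    and f :: "'a \<Rightarrow> complex"
  assumes "rooted_tree par rt"
    and "forward_stochastic par rt q"
    and "lam \<noteq> 0"
    and "n \<ge> 1"
    and "lambda_polyharmonic par rt q lam n f"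
  shows "\<exists>h :: nat \<Rightarrow> 'a \<Rightarrow> complex.
           (\<forall>k<n. lambda_harmonic par rt q lam (h k)) \<and>
           (\<forall>x. f x = (\<Sum>k<n. of_nat (depth par rt x) ^ k * h k x)) \<and>
           (\<forall>h' :: nat \<Rightarrow> 'a \<Rightarrow> complex.
              (\<forall>k<n. lambda_harmonic par rt q lam (h' k)) \<and>
              (\<forall>x. f x = (\<Sum>k<n. of_nat (depth par rt x) ^ k * h' k x))
              \<longrightarrow> (\<forall>k<n. h' k = h k))"
proof -
  \<comment> \<open>Only the support of q enters, through children.\<close>
  note tree = assms(1) and lam = assms(3)
  obtain h where h: "\<forall>j. lambda_harmonic par rt q lam (h j)"
    and fh: "\<forall>x. f x = (\<Sum>j<n. of_nat (depth par rt x) ^ j * h j x)"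
    using lambda_polyharmonic_power_expansion[OF tree lam assms(5)] by blast
  have "h' k = h k"
    if h': "\<forall>k<n. lambda_harmonic par rt q lam (h' k)"
      and fh': "\<forall>x. f x = (\<Sum>k<n. of_nat (depth par rt x) ^ k * h' k x)" and "k < n" for h' k
  proof (rule lambda_harmonic_depth_power_expansion_unique[OF tree lam])
    show "\<forall>x. (\<Sum>k<n. of_nat (depth par rt x) ^ k * h k x)
      = (\<Sum>k<n. of_nat (depth par rt x) ^ k * h' k x)"
      using fh fh' by metis
  qed (use h h' \<open>k < n\<close> in auto)
  then show ?thesis
    using h fh by blast
qed

end
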